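(* The functionally independent Casimir invariants of the Lie algebra $\mathfrak{g}_{n}$ are the linear central elements $z_{i,j}$ ($1\leq i\leq j\leq n-2$) and the $n$th degree polynomial $C_{n}=-\det(M_n)$, where $M_n$ is the $n\times n$ symmetric matrix with coefficients in $\mathfrak{g}_n$ \begin{equation*} M_n:=\begin{pmatrix} z_{1,1} & \cdots & z_{1,n-2} & -y_{1,-} & y_{1,+} \\ \vdots & \ddots & \vdots & \vdots & \vdots \\ z_{1,n-2} & \cdots & z_{n-2,n-2} & -y_{n-2,-} & y_{n-2,+} \\ -y_{1,-} & \cdots & -y_{n-2,-} & -2x_{-} & h \\ y_{1,+} & \cdots & y_{n-2,+} & h & 2x_{+} \end{pmatrix}. \end{equation*}
   Context: For $n\geq 2$, $\mathfrak{g}_n$ is the $n(n+1)/2$-dimensional Lie algebra over $\mathbb{K}$ ($\mathbb{R}$ or $\mathbb{C}$) with basis $h,x_-,x_+$, $y_{i,\pm}$ ($i=1,\dots,n-2$), $z_{i,j}$ ($1\le i\le j\le n-2$), and commutation relations $[x_+,x_-]=h$, $[h,x_\pm]=\pm 2x_\pm$, $[h,y_{i,\pm}]=\pm y_{i,\pm}$, $[x_-,y_{i,-}]=[x_+,y_{i,+}]=0$, $[x_-,y_{i,+}]=y_{i,-}$, $[x_+,y_{i,-}]=y_{i,+}$, $[y_{i,+},y_{j,+}]=[y_{i,-},y_{j,-}]=0$, $[y_{i,+},y_{j,-}]=z_{\min(i,j),\max(i,j)}$, and the $z_{i,j}$ are central. A (polynomial) Casimir element is an element $C$ of the symmetric algebra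 $S\mathfrak{g}_n\cong\mathbb{K}[h,x_-,x_+,\dots,z_{n-2,n-2}]$ (with the Lie–Poisson bracket induced by the Lie bracket) annihilated by the adjoint action of $\mathfrak{g}_n$ extended by derivations, i.e. $\{C,x\}=0$ for all $x\in\mathfrak{g}_n$. It was shown earlier (via the Beltrametti–Blasi formula) that $\mathfrak{g}_n$ has exactly $n(n-1)/2\cdot$—more precisely $(n-1)(n-2)/2+1$—functionally independent Casimir invariants, of which $(n-1)(n-2)/2$ are the central elements $z_{i,j}$. *)

theory Defs
  imports "HOL-Library.Poly_Mapping" "HOL-Combinatorics.Permutations"
begin

datatype gvar = H | Xm | Xp | Ym nat | Yp nat | Z nat nat

definition gbasis :: "nat \<Rightarrow> gvar set" where
  "gbasis n = {H, Xm, Xp} \<union> Ym ` {1..n-2} \<union> Yp ` {1..n-2}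
      \<union> {Z i j | i j. 1 \<le> i \<and> i \<le> j \<and> j \<le> n-2}"

text \<open>Symmetric algebra S g = commutative polynomial ring in the basis elements
  (polynomials as finitely supported maps from monomials to coefficients).\<close>
type_synonym 'a spoly = "(gvar \<Rightarrow>\<^sub>0 nat) \<Rightarrow>\<^sub>0 'a"

definition var :: "gvar \<Rightarrow> 'a::comm_ring_1 spoly" where
  "var v = Poly_Mapping.single (Poly_Mapping.single v 1) 1"

definition pd :: "gvar \<Rightarrow> 'a::comm_ring_1 spoly \<Rightarrow> 'a spoly" where
  "pd a p = (\<Sum>m\<in>Poly_Mapping.keys p. Poly_Mapping.single (m - Poly_Mapping.single a (1::nat))
                 (Poly_Mapping.lookup p m * of_nat (Poly_Mapping.lookup (m :: gvar \<Rightarrow>\<^sub>0 nat) a)))"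

text \<open>Evaluation of a polynomial at a point (a linear functional on g).\<close>
definition peval :: "(gvar \<Rightarrow> 'a::comm_ring_1) \<Rightarrow> 'a spoly \<Rightarrow> 'a" where
  "peval \<xi> p = (\<Sum>m\<in>Poly_Mapping.keys p. Poly_Mapping.lookup p m * (\<Prod>v\<in>Poly_Mapping.keys m. \<xi> v ^ Poly_Mapping.lookup m v))"

text \<open>Lie bracket of basis elements (valid indices assumed), as linear elements of S g.\<close>
fun brk :: "gvar \<Rightarrow> gvar \<Rightarrow> 'a::comm_ring_1 spoly" where
  "brk Xp Xm = var H"
| "brk Xm Xp = - var H"
| "brk H Xp = 2 * var Xp"
| "brk Xp H = - (2 * var Xp)"
| "brk H Xm = - (2 * var Xm)"
| "brk Xm H = 2 * var Xm"
| "brk H (Yp i) = var (Yp i)"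
| "brk (Yp i) H = - var (Yp i)"
| "brk H (Ym i) = - var (Ym i)"
| "brk (Ym i) H = var (Ym i)"
| "brk Xm (Yp i) = var (Ym i)"
| "brk (Yp i) Xm = - var (Ym i)"
| "brk Xp (Ym i) = var (Yp i)"
| "brk (Ym i) Xp = - var (Yp i)"
| "brk (Yp i) (Ym j) = var (Z (min i j) (max i j))"
| "brk (Ym j) (Yp i) = - var (Z (min i j) (max i j))"
| "brk _ _ = 0"

definition pb :: "nat \<Rightarrow> 'a::comm_ring_1 spoly \<Rightarrow> 'a spoly \<Rightarrow> 'a spoly" where
  "pb n f g = (\<Sum>a\<in>gbasis n. \<Sum>b\<in>gbasis n. brk a b * pd a f * pd b g)"

definition casimir :: "nat \<Rightarrow> 'a::comm_ring_1 spoly \<Rightarrow> bool" where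
  "casimir n C \<longleftrightarrow> (\<forall>m\<in>Poly_Mapping.keys C. Poly_Mapping.keys m \<subseteq> gbasis n) \<and> (\<forall>x\<in>gbasis n. pb n C (var x) = 0)"

definition grad_indep_at :: "nat \<Rightarrow> 'a::comm_ring_1 spoly list \<Rightarrow> (gvar \<Rightarrow> 'a) \<Rightarrow> bool" where
  "grad_indep_at n Fs \<xi> \<longleftrightarrow>
     (\<forall>c::nat \<Rightarrow> 'a. (\<forall>a\<in>gbasis n. (\<Sum>k<length Fs. c k * peval \<xi> (pd a (Fs ! k))) = 0)
          \<longrightarrow> (\<forall>k<length Fs. c k = 0))"

text \<open>Functional independence: the Jacobian has full rank at some (hence generic) point.\<close>
definition functionally_independent :: "nat \<Rightarrow> 'a::comm_ring_1 spoly list \<Rightarrow> bool" where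
  "functionally_independent n Fs \<longleftrightarrow> (\<exists>\<xi>. grad_indep_at n Fs \<xi>)"

text \<open>The matrix M_n (0-based indices; rows/columns 0..n-3 correspond to 1..n-2,
  row/column n-2 to x_-, row/column n-1 to x_+).\<close>
definition Mmat :: "nat \<Rightarrow> nat \<Rightarrow> nat \<Rightarrow> 'a::comm_ring_1 spoly" where
  "Mmat n r c =
    (if r < n-2 \<and> c < n-2 then var (Z (min r c + 1) (max r c + 1))
     else if r < n-2 \<and> c = n-2 then - var (Ym (r+1))
     else if r < n-2 \<and> c = n-1 then var (Yp (r+1))
     else if c < n-2 \<and> r = n-2 then - var (Ym (c+1))
     else if c < n-2 \<and> r = n-1 then var (Yp (c+1))
     else if r = n-2 \<and> c = n-2 then - (2 * var Xm)
     else if r = n-1 \<and> c = n-1 then 2 * var Xp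
     else var H)"

definition detn :: "nat \<Rightarrow> (nat \<Rightarrow> nat \<Rightarrow> 'a::comm_ring_1) \<Rightarrow> 'a" where
  "detn n M = (\<Sum>p\<in>{p. p permutes {..<n}}. of_int (sign p) * (\<Prod>i<n. M i (p i)))"

definition Cn :: "nat \<Rightarrow> 'a::comm_ring_1 spoly" where
  "Cn n = - detn n (Mmat n)"

definition zpairs :: "nat \<Rightarrow> (nat \<times> nat) list" where
  "zpairs n = [(i, j). i \<leftarrow> [1..<n-1], j \<leftarrow> [i..<n-1]]"

definition invariants :: "nat \<Rightarrow> 'a::comm_ring_1 spoly list" where
  "invariants n = Cn n # map (\<lambda>(i, j). var (Z i j)) (zpairs n)"

end

theory Submission
  imports Defs "Jordan_Normal_Form.Determinant" "HOL-Library.Product_Lexorder"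
begin

text \<open>
  For a basis element x, the derivation {-, x} of S(g_n) acts on the entries of M_n as an
  infinitesimal congruence, {M_n, x} = K M_n + M_n K^T with K a traceless integer matrix.
  Jacobi's formula then gives {det M_n, x} = 2 tr K det M_n = 0, so C_n is a Casimir element.
  It is homogeneous of degree n, and its derivative along x_+ is -2 at a point where M_n
  without its last row and column is the identity; there the gradients of C_n and of the
  z_{ij} are independent.

  Conversely, the conditions {C, x} = 0 for x = x_-, x_+, y_{j,-}, y_{j,+} are a linear system
  for the derivatives of C along h, x_-, x_+, y_{j,-}, y_{j,+}. Solving the y-equations with the
  adjugate of the generically invertible matrix (z_{ij}), and then the x-equations, determines
  every solution up to a fixed nonzero polynomial factor from its h-component. So the gradients
  of any two Casimir elements are proportional in these directions, and the z_{ij} span the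
  remaining ones.\<close>

section \<open>Polynomials as sums of terms\<close>

definition sum_terms :: "('m \<Rightarrow> 'a::zero \<Rightarrow> 'b::comm_monoid_add) \<Rightarrow> ('m \<Rightarrow>\<^sub>0 'a) \<Rightarrow> 'b" where
  "sum_terms f p = (\<Sum>m\<in>Poly_Mapping.keys p. f m (Poly_Mapping.lookup p m))"

definition coeff_additive :: "('m \<Rightarrow> 'a::plus \<Rightarrow> 'b::plus) \<Rightarrow> bool" where
  "coeff_additive f \<longleftrightarrow> (\<forall>m a b. f m (a + b) = f m a + f m b)"

lemma coeff_additive_zero:
  fixes f :: "'m \<Rightarrow> 'a::monoid_add \<Rightarrow> 'b::cancel_comm_monoid_add"
  assumes "coeff_additive f"
  shows "f m 0 = 0"
  using assms unfolding coeff_additive_def by (metis add.right_neutral add_left_cancel)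

lemma sum_terms_zero [simp]: "sum_terms f 0 = 0"
  by (simp add: sum_terms_def)

context
  fixes f :: "'m \<Rightarrow> 'a::comm_monoid_add \<Rightarrow> 'b::cancel_comm_monoid_add"
  assumes f: "coeff_additive f"
begin

lemma sum_terms_superset:
  assumes "finite S" "Poly_Mapping.keys p \<subseteq> S"
  shows "sum_terms f p = (\<Sum>m\<in>S. f m (Poly_Mapping.lookup p m))"
  unfolding sum_terms_def
  by (rule sum.mono_neutral_left) (use assms coeff_additive_zero[OF f] in \<open>auto simp: in_keys_iff\<close>)

lemma sum_terms_add: "sum_terms f (p + q) = sum_terms f p + sum_terms f q"
proof -
  let ?S = "Poly_Mapping.keys p \<union> Poly_Mapping.keys q"
  have "sum_terms f (p + q) = (\<Sum>m\<in>?S. f m (Poly_Mapping.lookup (p + q) m))"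
    using keys_add[of p q] by (intro sum_terms_superset) auto
  also have "\<dots> = (\<Sum>m\<in>?S. f m (Poly_Mapping.lookup p m)) + (\<Sum>m\<in>?S. f m (Poly_Mapping.lookup q m))"
    using f by (simp add: lookup_add coeff_additive_def sum.distrib)
  also have "\<dots> = sum_terms f p + sum_terms f q"
    by (subst (1 2) sum_terms_superset) auto
  finally show ?thesis .
qed

lemma sum_terms_sum: "sum_terms f (sum g A) = (\<Sum>i\<in>A. sum_terms f (g i))"
  by (induction A rule: infinite_finite_induct) (simp_all add: sum_terms_add)

lemma sum_terms_single: "sum_terms f (Poly_Mapping.single m c) = f m c"
  using coeff_additive_zero[OF f] by (auto simp: sum_terms_def)

end

lemma poly_mapping_sum_single:
  "p = (\<Sum>m\<in>Poly_Mapping.keys p. Poly_Mapping.single m (Poly_Mapping.lookup p m))"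
  by (rule poly_mapping_eqI) (simp add: lookup_sum lookup_single when_def in_keys_iff)

lemma sum_terms_mult:
  fixes f g h :: "'m::monoid_add \<Rightarrow> 'a::semiring_0 \<Rightarrow> 'b::comm_ring_1"
  assumes "coeff_additive h"
    and "\<And>m m' c c'. h (m + m') (c * c') = f m c * g m' c'"
  shows "sum_terms h (p * q) = sum_terms f p * sum_terms g q"
proof -
  have "p * q = (\<Sum>m\<in>Poly_Mapping.keys p. \<Sum>m'\<in>Poly_Mapping.keys q.
      Poly_Mapping.single (m + m') (Poly_Mapping.lookup p m * Poly_Mapping.lookup q m'))"
    by (subst (1) poly_mapping_sum_single, subst (2) poly_mapping_sum_single)
      (simp add: sum_product mult_single)
  then have "sum_terms h (p * q) = (\<Sum>m\<in>Poly_Mapping.keys p. \<Sum>m'\<in>Poly_Mapping.keys q.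
      f m (Poly_Mapping.lookup p m) * g m' (Poly_Mapping.lookup q m'))"
    by (simp add: sum_terms_sum[OF assms(1)] sum_terms_single[OF assms(1)] assms(2))
  then show ?thesis
    by (simp add: sum_terms_def sum_product)
qed

section \<open>Derivations and Jacobi's formula\<close>

locale derivation =
  fixes D :: "'a::comm_ring_1 \<Rightarrow> 'a"
  assumes der_add: "D (x + y) = D x + D y"
    and der_mult: "D (x * y) = D x * y + x * D y"
begin

lemma der_zero [simp]: "D 0 = 0"
  using der_add[of 0 0] by simp

lemma der_one [simp]: "D 1 = 0"
  using der_mult[of 1 1] by simp

lemma der_uminus: "D (- x) = - D x"
proof -
  have "D x + D (- x) = 0"
    using der_add[of x "- x"] by simp
  then show ?thesis
    using minus_unique by metis
qed

lemma der_diff: "D (x - y) = D x - D y"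
  using der_add[of x "- y"] by (simp add: der_uminus)

lemma der_of_nat [simp]: "D (of_nat k) = 0"
  by (induction k) (simp_all add: der_add)

lemma der_of_int [simp]: "D (of_int k) = 0"
  by (cases k) (simp_all add: der_diff der_uminus)

lemma der_numeral [simp]: "D (numeral k) = 0"
  using der_of_nat[of "numeral k"] by simp

lemma der_sum: "D (sum f A) = (\<Sum>i\<in>A. D (f i))"
  by (induction A rule: infinite_finite_induct) (simp_all add: der_add)

lemma der_prod: "D (prod f A) = (\<Sum>k\<in>A. D (f k) * prod f (A - {k}))"
proof (induction A rule: infinite_finite_induct)
  case (insert x F)
  have "D (prod f (insert x F)) = D (f x) * prod f F + (\<Sum>k\<in>F. D (f k) * (f x * prod f (F - {k})))"
    using insert by (simp add: der_mult sum_distrib_left algebra_simps)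
  also have "(\<Sum>k\<in>F. D (f k) * (f x * prod f (F - {k}))) = (\<Sum>k\<in>F. D (f k) * prod f (insert x F - {k}))"
    using insert by (intro sum.cong refl) (auto simp: insert_Diff_if prod.insert_remove)
  finally show ?case
    using insert by (simp add: insert_Diff_if)
qed simp_all

lemma der_det:
  assumes A: "A \<in> carrier_mat n n"
  shows "D (det A) = (\<Sum>i<n. \<Sum>j<n. D (A $$ (i,j)) * cofactor A i j)"
proof -
  define B where "B k = mat n n (\<lambda>(i,j). if i = k then D (A $$ (i,j)) else A $$ (i,j))" for k
  have B: "B k \<in> carrier_mat n n" for k
    by (simp add: B_def)
  have row: "(\<Prod>i\<in>{0..<n}. B k $$ (i, p i)) = D (A $$ (k, p k)) * (\<Prod>i\<in>{0..<n} - {k}. A $$ (i, p i))"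
    if p: "p permutes {0..<n}" and k: "k < n" for p k
  proof -
    have "(\<Prod>i\<in>{0..<n} - {k}. B k $$ (i, p i)) = (\<Prod>i\<in>{0..<n} - {k}. A $$ (i, p i))"
      using p by (intro prod.cong refl) (auto simp: B_def permutes_in_image)
    then show ?thesis
      using k p by (simp add: prod.remove[of _ k] B_def permutes_in_image)
  qed
  have det_B: "det (B k) = (\<Sum>j<n. D (A $$ (k,j)) * cofactor A k j)" if k: "k < n" for k
  proof -
    have "mat_delete (B k) k j = mat_delete A k j" for j
      using A by (intro eq_matI) (auto simp: mat_delete_def B_def)
    then show ?thesis
      using k unfolding laplace_expansion_row[OF B k] by (simp add: cofactor_def B_def)
  qed
  have "D (det A) = (\<Sum>p\<in>{p. p permutes {0..<n}}. \<Sum>k\<in>{0..<n}.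
      signof p * (D (A $$ (k, p k)) * (\<Prod>i\<in>{0..<n} - {k}. A $$ (i, p i))))"
    by (simp add: det_def'[OF A] der_sum der_mult der_prod sum_distrib_left)
  also have "\<dots> = (\<Sum>k\<in>{0..<n}. det (B k))"
    by (subst sum.swap) (simp add: det_def'[OF B] row)
  finally show ?thesis
    by (simp add: atLeast0LessThan det_B)
qed

end

lemma derivation_lincomb:
  assumes "\<And>a. a \<in> A \<Longrightarrow> derivation (D a)"
  shows "derivation (\<lambda>x. \<Sum>a\<in>A. c a * D a x)"
proof
  fix x y
  show "(\<Sum>a\<in>A. c a * D a (x + y)) = (\<Sum>a\<in>A. c a * D a x) + (\<Sum>a\<in>A. c a * D a y)"
    using assms by (simp add: derivation.der_add distrib_left sum.distrib cong: sum.cong)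
  show "(\<Sum>a\<in>A. c a * D a (x * y)) = (\<Sum>a\<in>A. c a * D a x) * y + x * (\<Sum>a\<in>A. c a * D a y)"
    using assms
    by (simp add: derivation.der_mult algebra_simps sum.distrib sum_distrib_left sum_distrib_right
        cong: sum.cong)
qed

lemma sum_delta_mult_left:
  fixes k n :: nat
  assumes "k < n"
  shows "(\<Sum>l<n. (if l = k then a else 0) * f l) = a * (f k :: 'a::semiring_0)"
proof -
  have "(\<Sum>l<n. (if l = k then a else 0) * f l) = (\<Sum>l<n. if l = k then a * f k else 0)"
    by (intro sum.cong) auto
  then show ?thesis
    using assms by simp
qed

lemma sum_delta_mult_right:
  fixes k n :: nat
  assumes "k < n"
  shows "(\<Sum>l<n. f l * (if l = k then a else 0)) = f k * (a :: 'a::semiring_0)"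
proof -
  have "(\<Sum>l<n. f l * (if l = k then a else 0)) = (\<Sum>l<n. if l = k then f k * a else 0)"
    by (intro sum.cong) auto
  then show ?thesis
    using assms by simp
qed

lemma sum_row_cofactor:
  fixes A :: "'a::comm_ring_1 mat"
  assumes A: "A \<in> carrier_mat n n" and "l < n" "i < n"
  shows "(\<Sum>j<n. A $$ (l,j) * cofactor A i j) = (if l = i then det A else 0)"
proof -
  have "(A * adj_mat A) $$ (l,i) = (\<Sum>j<n. A $$ (l,j) * cofactor A i j)"
    using assms by (simp add: adj_mat_def scalar_prod_def atLeast0LessThan)
  then show ?thesis
    using adj_mat(2)[OF A] assms by (cases "l = i") auto
qed

lemma sum_col_cofactor:
  fixes A :: "'a::comm_ring_1 mat"
  assumes A: "A \<in> carrier_mat n n" and "l < n" "j < n"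
  shows "(\<Sum>i<n. cofactor A i j * A $$ (i,l)) = (if j = l then det A else 0)"
proof -
  have "(adj_mat A * A) $$ (j,l) = (\<Sum>i<n. cofactor A i j * A $$ (i,l))"
    using assms by (simp add: adj_mat_def scalar_prod_def atLeast0LessThan)
  then show ?thesis
    using adj_mat(3)[OF A] assms by (cases "j = l") auto
qed

lemma cofactor_solution:
  fixes A :: "'a::comm_ring_1 mat"
  assumes A: "A \<in> carrier_mat m m"
    and eqs: "\<And>j. j < m \<Longrightarrow> (\<Sum>i<m. A $$ (j,i) * v i) = w j" and k: "k < m"
  shows "det A * v k = (\<Sum>j<m. cofactor A j k * w j)"
proof -
  have "(\<Sum>j<m. cofactor A j k * w j) = (\<Sum>j<m. \<Sum>i<m. v i * (cofactor A j k * A $$ (j,i)))"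
    by (intro sum.cong refl) (simp add: eqs[symmetric] sum_distrib_left mult_ac)
  also have "\<dots> = (\<Sum>i<m. v i * (\<Sum>j<m. cofactor A j k * A $$ (j,i)))"
    by (subst sum.swap) (simp add: sum_distrib_left)
  also have "\<dots> = (\<Sum>i<m. if i = k then v k * det A else 0)"
    by (intro sum.cong refl) (auto simp: sum_col_cofactor[OF A _ k])
  finally show ?thesis
    using k by (simp add: mult.commute)
qed

lemma sum_left_mult_cofactor:
  fixes A :: "'a::comm_ring_1 mat"
  assumes A: "A \<in> carrier_mat n n"
  shows "(\<Sum>i<n. \<Sum>j<n. (\<Sum>l<n. K i l * A $$ (l,j)) * cofactor A i j) = (\<Sum>i<n. K i i) * det A"
proof -
  have "(\<Sum>i<n. \<Sum>j<n. (\<Sum>l<n. K i l * A $$ (l,j)) * cofactor A i j)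
      = (\<Sum>i<n. \<Sum>j<n. \<Sum>l<n. K i l * (A $$ (l,j) * cofactor A i j))"
    by (simp add: sum_distrib_right mult.assoc)
  also have "\<dots> = (\<Sum>i<n. \<Sum>l<n. K i l * (\<Sum>j<n. A $$ (l,j) * cofactor A i j))"
    unfolding sum_distrib_left by (rule sum.cong[OF refl], rule sum.swap)
  also have "\<dots> = (\<Sum>i<n. \<Sum>l<n. if l = i then K i l * det A else 0)"
    by (intro sum.cong refl) (simp add: sum_row_cofactor[OF A])
  finally show ?thesis
    by (simp add: sum_distrib_right)
qed

lemma sum_right_mult_cofactor:
  fixes A :: "'a::comm_ring_1 mat"
  assumes A: "A \<in> carrier_mat n n"
  shows "(\<Sum>i<n. \<Sum>j<n. (\<Sum>l<n. A $$ (i,l) * K j l) * cofactor A i j) = (\<Sum>i<n. K i i) * det A"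
proof -
  have "(\<Sum>i<n. \<Sum>j<n. (\<Sum>l<n. A $$ (i,l) * K j l) * cofactor A i j)
      = (\<Sum>i<n. \<Sum>j<n. \<Sum>l<n. K j l * (cofactor A i j * A $$ (i,l)))"
    by (intro sum.cong refl) (simp add: sum_distrib_left mult_ac)
  also have "\<dots> = (\<Sum>j<n. \<Sum>i<n. \<Sum>l<n. K j l * (cofactor A i j * A $$ (i,l)))"
    by (rule sum.swap)
  also have "\<dots> = (\<Sum>j<n. \<Sum>l<n. K j l * (\<Sum>i<n. cofactor A i j * A $$ (i,l)))"
    unfolding sum_distrib_left by (rule sum.cong[OF refl], rule sum.swap)
  also have "\<dots> = (\<Sum>j<n. \<Sum>l<n. if l = j then K j l * det A else 0)"
    by (intro sum.cong refl) (auto simp: sum_col_cofactor[OF A])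
  finally show ?thesis
    by (simp add: sum_distrib_right)
qed

lemma (in derivation) der_det_congruence:
  assumes A: "A \<in> carrier_mat n n"
    and DA: "\<And>i j. i < n \<Longrightarrow> j < n \<Longrightarrow>
      D (A $$ (i,j)) = (\<Sum>l<n. K i l * A $$ (l,j)) + (\<Sum>l<n. A $$ (i,l) * K j l)"
  shows "D (det A) = 2 * (\<Sum>i<n. K i i) * det A"
proof -
  have "D (det A) = (\<Sum>i<n. \<Sum>j<n.
      ((\<Sum>l<n. K i l * A $$ (l,j)) + (\<Sum>l<n. A $$ (i,l) * K j l)) * cofactor A i j)"
    unfolding der_det[OF A] by (intro sum.cong refl) (simp add: DA)
  also have "\<dots> = (\<Sum>i<n. \<Sum>j<n. (\<Sum>l<n. K i l * A $$ (l,j)) * cofactor A i j)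
      + (\<Sum>i<n. \<Sum>j<n. (\<Sum>l<n. A $$ (i,l) * K j l) * cofactor A i j)"
    by (simp only: distrib_right sum.distrib)
  also have "\<dots> = (\<Sum>i<n. K i i) * det A + (\<Sum>i<n. K i i) * det A"
    by (simp only: sum_left_mult_cofactor[OF A] sum_right_mult_cofactor[OF A])
  also have "\<dots> = 2 * (\<Sum>i<n. K i i) * det A"
    by (simp only: mult_2 distrib_right)
  finally show ?thesis .
qed

section \<open>Partial derivatives and evaluation\<close>

definition pd_term :: "gvar \<Rightarrow> (gvar \<Rightarrow>\<^sub>0 nat) \<Rightarrow> 'a::comm_ring_1 \<Rightarrow> 'a spoly" where
  "pd_term a m c =
    Poly_Mapping.single (m - Poly_Mapping.single a 1) (c * of_nat (Poly_Mapping.lookup m a))"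

lemma coeff_additive_pd_term: "coeff_additive (pd_term a)"
  by (simp add: coeff_additive_def pd_term_def distrib_right single_add)

lemma pd_eq_sum_terms: "pd a p = sum_terms (pd_term a) p"
  by (simp add: pd_def sum_terms_def pd_term_def)

lemma pd_single: "pd a (Poly_Mapping.single m c) = pd_term a m c"
  by (simp add: pd_eq_sum_terms sum_terms_single coeff_additive_pd_term)

lemma pd_sum: "pd a (sum f A) = (\<Sum>i\<in>A. pd a (f i))"
  by (simp add: pd_eq_sum_terms sum_terms_sum coeff_additive_pd_term)

lemma monomial_diff_add:
  fixes m m' :: "'v \<Rightarrow>\<^sub>0 nat"
  assumes "Poly_Mapping.lookup m a \<noteq> 0"
  shows "m + m' - Poly_Mapping.single a 1 = m - Poly_Mapping.single a 1 + m'"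
    and "m' + m - Poly_Mapping.single a 1 = m' + (m - Poly_Mapping.single a 1)"
proof -
  have "Poly_Mapping.lookup m a + k - 1 = Poly_Mapping.lookup m a - 1 + k"
    and "k + Poly_Mapping.lookup m a - 1 = k + (Poly_Mapping.lookup m a - 1)" for k
    using assms by (cases "Poly_Mapping.lookup m a"; simp)+
  then show "m + m' - Poly_Mapping.single a 1 = m - Poly_Mapping.single a 1 + m'"
    and "m' + m - Poly_Mapping.single a 1 = m' + (m - Poly_Mapping.single a 1)"
    by (auto intro!: poly_mapping_eqI simp: lookup_minus lookup_add lookup_single when_def)
qed

lemma pd_single_mult:
  "pd a (Poly_Mapping.single m c * Poly_Mapping.single m' c') =
     pd a (Poly_Mapping.single m c) * Poly_Mapping.single m' c'
     + Poly_Mapping.single m c * pd a (Poly_Mapping.single m' c')"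
proof -
  let ?d = "Poly_Mapping.single a (1::nat)"
  have left: "Poly_Mapping.single (m + m' - ?d) (c * c' * of_nat (Poly_Mapping.lookup m a))
      = Poly_Mapping.single (m - ?d + m') (c * of_nat (Poly_Mapping.lookup m a) * c')"
    using monomial_diff_add(1)[of m a m']
    by (cases "Poly_Mapping.lookup m a = 0") (simp_all add: mult_ac)
  have right: "Poly_Mapping.single (m + m' - ?d) (c * c' * of_nat (Poly_Mapping.lookup m' a))
      = Poly_Mapping.single (m + (m' - ?d)) (c * (c' * of_nat (Poly_Mapping.lookup m' a)))"
    using monomial_diff_add(2)[of m' a m]
    by (cases "Poly_Mapping.lookup m' a = 0") (simp_all add: mult_ac)
  have "pd a (Poly_Mapping.single m c * Poly_Mapping.single m' c')
      = Poly_Mapping.single (m + m' - ?d) (c * c' * of_nat (Poly_Mapping.lookup m a))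
        + Poly_Mapping.single (m + m' - ?d) (c * c' * of_nat (Poly_Mapping.lookup m' a))"
    by (simp add: pd_single pd_term_def mult_single lookup_add distrib_left single_add)
  also have "\<dots> = Poly_Mapping.single (m - ?d + m') (c * of_nat (Poly_Mapping.lookup m a) * c')
      + Poly_Mapping.single (m + (m' - ?d)) (c * (c' * of_nat (Poly_Mapping.lookup m' a)))"
    by (simp only: left right)
  finally show ?thesis
    by (simp add: pd_single pd_term_def mult_single)
qed

lemma derivation_pd: "derivation (pd a :: 'a::comm_ring_1 spoly \<Rightarrow> 'a spoly)"
proof
  fix p q :: "'a spoly"
  show "pd a (p + q) = pd a p + pd a q"
    by (simp add: pd_eq_sum_terms sum_terms_add coeff_additive_pd_term)
  let ?P = "\<lambda>m. Poly_Mapping.single m (Poly_Mapping.lookup p m)"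
  let ?Q = "\<lambda>m. Poly_Mapping.single m (Poly_Mapping.lookup q m)"
  have "pd a (p * q) = pd a ((\<Sum>m\<in>Poly_Mapping.keys p. ?P m) * (\<Sum>m\<in>Poly_Mapping.keys q. ?Q m))"
    by (subst (1 2) poly_mapping_sum_single) (rule refl)
  also have "\<dots> = (\<Sum>m\<in>Poly_Mapping.keys p. \<Sum>m'\<in>Poly_Mapping.keys q.
      pd a (?P m) * ?Q m' + ?P m * pd a (?Q m'))"
    by (simp add: sum_product pd_sum pd_single_mult)
  also have "\<dots> = pd a (\<Sum>m\<in>Poly_Mapping.keys p. ?P m) * (\<Sum>m\<in>Poly_Mapping.keys q. ?Q m)
      + (\<Sum>m\<in>Poly_Mapping.keys p. ?P m) * pd a (\<Sum>m\<in>Poly_Mapping.keys q. ?Q m)"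
    by (simp add: sum_product sum.distrib pd_sum)
  finally show "pd a (p * q) = pd a p * q + p * pd a q"
    by (simp flip: poly_mapping_sum_single)
qed

interpretation pd: derivation "pd a" for a
  by (rule derivation_pd)

lemma pd_var: "pd a (var v) = (if a = v then 1 else 0)"
  by (auto simp: var_def pd_single pd_term_def lookup_single)

definition monomial_value :: "(gvar \<Rightarrow> 'a::comm_ring_1) \<Rightarrow> (gvar \<Rightarrow>\<^sub>0 nat) \<Rightarrow> 'a" where
  "monomial_value \<xi> m = (\<Prod>v\<in>Poly_Mapping.keys m. \<xi> v ^ Poly_Mapping.lookup m v)"

lemma monomial_value_superset:
  assumes "finite T" "Poly_Mapping.keys m \<subseteq> T"
  shows "monomial_value \<xi> m = (\<Prod>v\<in>T. \<xi> v ^ Poly_Mapping.lookup m v)"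
  unfolding monomial_value_def by (rule prod.mono_neutral_left) (use assms in \<open>auto simp: in_keys_iff\<close>)

lemma monomial_value_add: "monomial_value \<xi> (m + m') = monomial_value \<xi> m * monomial_value \<xi> m'"
proof -
  let ?T = "Poly_Mapping.keys m \<union> Poly_Mapping.keys m'"
  have "monomial_value \<xi> (m + m') = (\<Prod>v\<in>?T. \<xi> v ^ Poly_Mapping.lookup (m + m') v)"
    using keys_add[of m m'] by (intro monomial_value_superset) auto
  also have "\<dots> = (\<Prod>v\<in>?T. \<xi> v ^ Poly_Mapping.lookup m v) * (\<Prod>v\<in>?T. \<xi> v ^ Poly_Mapping.lookup m' v)"
    by (simp add: lookup_add power_add prod.distrib)
  also have "\<dots> = monomial_value \<xi> m * monomial_value \<xi> m'"
    by (subst (1 2) monomial_value_superset) auto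
  finally show ?thesis .
qed

lemma peval_eq_sum_terms: "peval \<xi> p = sum_terms (\<lambda>m c. c * monomial_value \<xi> m) p"
  by (simp add: peval_def sum_terms_def monomial_value_def)

lemma coeff_additive_peval_term: "coeff_additive (\<lambda>m c. c * monomial_value \<xi> m)"
  by (simp add: coeff_additive_def distrib_right)

interpretation peval: comm_ring_hom "peval \<xi>"
proof
  fix p q
  show "peval \<xi> (p + q) = peval \<xi> p + peval \<xi> q"
    by (simp add: peval_eq_sum_terms sum_terms_add coeff_additive_peval_term)
  show "peval \<xi> (p * q) = peval \<xi> p * peval \<xi> q"
    unfolding peval_eq_sum_terms
    by (rule sum_terms_mult[OF coeff_additive_peval_term]) (simp add: monomial_value_add)
  show "peval \<xi> 0 = 0"
    by (simp add: peval_def)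
  show "peval \<xi> 1 = 1"
    by (simp add: peval_def monomial_value_def flip: single_one)
qed

lemma peval_var [simp]: "peval \<xi> (var v) = \<xi> v"
  by (simp add: var_def peval_def)

lemma peval_pd_var: "peval \<xi> (pd a (var v)) = (if a = v then 1 else 0)"
  by (simp add: pd_var)

section \<open>The basis and the Poisson bracket\<close>

lemma H_in_gbasis [simp]: "H \<in> gbasis n"
  and Xm_in_gbasis [simp]: "Xm \<in> gbasis n"
  and Xp_in_gbasis [simp]: "Xp \<in> gbasis n"
  by (auto simp: gbasis_def)

lemma Ym_in_gbasis: "1 \<le> i \<Longrightarrow> i \<le> n - 2 \<Longrightarrow> Ym i \<in> gbasis n"
  and Yp_in_gbasis: "1 \<le> i \<Longrightarrow> i \<le> n - 2 \<Longrightarrow> Yp i \<in> gbasis n"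
  and Z_in_gbasis: "1 \<le> i \<Longrightarrow> i \<le> j \<Longrightarrow> j \<le> n - 2 \<Longrightarrow> Z i j \<in> gbasis n"
  by (auto simp: gbasis_def)

lemma finite_gbasis: "finite (gbasis n)"
proof -
  have "{Z i j | i j. 1 \<le> i \<and> i \<le> j \<and> j \<le> n-2} \<subseteq> (\<lambda>(i,j). Z i j) ` ({..n} \<times> {..n})"
    by auto
  then show ?thesis
    by (simp add: gbasis_def finite_subset)
qed

definition core_basis :: "nat \<Rightarrow> gvar set" where
  "core_basis n = {H, Xm, Xp} \<union> (\<lambda>k. Ym (Suc k)) ` {..<n-2} \<union> (\<lambda>k. Yp (Suc k)) ` {..<n-2}"

definition central_basis :: "nat \<Rightarrow> gvar set" where
  "central_basis n = {Z i j | i j. 1 \<le> i \<and> i \<le> j \<and> j \<le> n-2}"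

lemma gbasis_eq_core_central: "gbasis n = core_basis n \<union> central_basis n"
proof -
  have "Ym ` {1..n-2} = (\<lambda>k. Ym (Suc k)) ` {..<n-2}" "Yp ` {1..n-2} = (\<lambda>k. Yp (Suc k)) ` {..<n-2}"
    by (simp_all only: image_Suc_lessThan[symmetric] image_image)
  then show ?thesis
    unfolding gbasis_def core_basis_def central_basis_def by blast
qed

lemma finite_core_basis: "finite (core_basis n)"
  by (simp add: core_basis_def)

lemma core_central_disjoint: "core_basis n \<inter> central_basis n = {}"
  by (auto simp: core_basis_def central_basis_def)

lemma sum_core_basis:
  "(\<Sum>a\<in>core_basis n. f a)
     = f H + f Xm + f Xp + (\<Sum>k<n-2. f (Ym (Suc k))) + (\<Sum>k<n-2. f (Yp (Suc k)))"
proof -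
  let ?Ym = "(\<lambda>k. Ym (Suc k)) ` {..<n-2}" and ?Yp = "(\<lambda>k. Yp (Suc k)) ` {..<n-2}"
  have "(\<Sum>a\<in>core_basis n. f a) = sum f ({H, Xm, Xp} \<union> ?Ym) + sum f ?Yp"
    unfolding core_basis_def by (rule sum.union_disjoint) auto
  also have "sum f ({H, Xm, Xp} \<union> ?Ym) = sum f {H, Xm, Xp} + sum f ?Ym"
    by (rule sum.union_disjoint) auto
  also have "sum f ?Ym = (\<Sum>k<n-2. f (Ym (Suc k)))"
    by (simp add: sum.reindex inj_on_def)
  also have "sum f ?Yp = (\<Sum>k<n-2. f (Yp (Suc k)))"
    by (simp add: sum.reindex inj_on_def)
  finally show ?thesis
    by (simp add: add.assoc)
qed

lemma derivation_pb: "derivation (\<lambda>f. pb n f g)"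
proof -
  have "(\<lambda>f. pb n f g) = (\<lambda>f. \<Sum>a\<in>gbasis n. (\<Sum>b\<in>gbasis n. brk a b * pd b g) * pd a f)"
    by (simp add: pb_def fun_eq_iff sum_distrib_left sum_distrib_right mult_ac)
  then show ?thesis
    by (simp only:) (rule derivation_lincomb[OF derivation_pd])
qed

lemma pb_var_right:
  assumes "x \<in> gbasis n"
  shows "pb n f (var x) = (\<Sum>a\<in>gbasis n. brk a x * pd a f)"
  using assms unfolding pb_def by (simp add: pd_var finite_gbasis if_distrib cong: if_cong)

lemma pb_var_var:
  assumes "v \<in> gbasis n" "x \<in> gbasis n"
  shows "pb n (var v) (var x) = brk v x"
  using assms by (simp add: pb_var_right pd_var finite_gbasis if_distrib cong: if_cong)

lemma pb_var_eq_core_sum: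
  assumes "x \<in> gbasis n"
  shows "pb n f (var x) = (\<Sum>a\<in>core_basis n. brk a x * pd a f)"
proof -
  have "finite (central_basis n)"
    by (rule finite_subset[OF _ finite_gbasis[of n]]) (simp add: gbasis_eq_core_central)
  moreover have "(\<Sum>a\<in>central_basis n. brk a x * pd a f) = 0"
    by (rule sum.neutral) (auto simp: central_basis_def)
  ultimately show ?thesis
    using core_central_disjoint
    by (simp add: pb_var_right[OF assms] gbasis_eq_core_central sum.union_disjoint finite_core_basis)
qed

section \<open>C_n is a Casimir element\<close>

definition Mn :: "nat \<Rightarrow> 'a::comm_ring_1 spoly mat" where
  "Mn n = mat n n (\<lambda>(i,j). Mmat n i j)"

lemma Mn_carrier: "Mn n \<in> carrier_mat n n"
  by (simp add: Mn_def)

lemma Mn_index: "i < n \<Longrightarrow> j < n \<Longrightarrow> Mn n $$ (i,j) = Mmat n i j"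
  by (simp add: Mn_def)

lemma detn_eq_det: "detn n f = det (mat n n (\<lambda>(i,j). f i j))"
proof -
  have "det (mat n n (\<lambda>(i,j). f i j)) = (\<Sum>p\<in>{p. p permutes {0..<n}}. signof p * (\<Prod>i = 0..<n. f i (p i)))"
    by (subst det_def'[of _ n]) (auto intro!: sum.cong prod.cong simp: permutes_in_image)
  then show ?thesis
    by (simp add: detn_def atLeast0LessThan)
qed

lemma Cn_eq_det: "Cn n = - det (Mn n)"
  by (simp add: Cn_def detn_eq_det Mn_def)

definition Mmat_bracket :: "nat \<Rightarrow> gvar \<Rightarrow> nat \<Rightarrow> nat \<Rightarrow> 'a::comm_ring_1 spoly" where
  "Mmat_bracket n x r c =
    (if r < n-2 \<and> c < n-2 then brk (Z (min r c + 1) (max r c + 1)) x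
     else if r < n-2 \<and> c = n-2 then - brk (Ym (r+1)) x
     else if r < n-2 \<and> c = n-1 then brk (Yp (r+1)) x
     else if c < n-2 \<and> r = n-2 then - brk (Ym (c+1)) x
     else if c < n-2 \<and> r = n-1 then brk (Yp (c+1)) x
     else if r = n-2 \<and> c = n-2 then - (2 * brk Xm x)
     else if r = n-1 \<and> c = n-1 then 2 * brk Xp x
     else brk H x)"

lemma pb_Mmat:
  assumes "x \<in> gbasis n"
  shows "pb n (Mmat n r c) (var x) = Mmat_bracket n x r c"
proof -
  interpret derivation "\<lambda>f. pb n f (var x)"
    by (rule derivation_pb)
  have "Z (min r c + 1) (max r c + 1) \<in> gbasis n" if "r < n - 2" "c < n - 2"
    using that by (intro Z_in_gbasis) auto
  then show ?thesis
    unfolding Mmat_def Mmat_bracket_def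
    using assms by (auto simp: pb_var_var der_uminus der_mult Ym_in_gbasis Yp_in_gbasis)
qed

definition congruence_generator :: "nat \<Rightarrow> gvar \<Rightarrow> (nat \<Rightarrow> nat \<Rightarrow> 'a::comm_ring_1 spoly) \<Rightarrow> bool" where
  "congruence_generator n x K \<longleftrightarrow>
     (\<forall>r<n. \<forall>c<n. Mmat_bracket n x r c = (\<Sum>l<n. K r l * Mmat n l c) + (\<Sum>l<n. Mmat n r l * K c l))
     \<and> (\<Sum>i<n. K i i) = 0"

lemma less_add_2_cases:
  assumes "r < m + (2::nat)"
  obtains "r < m" | "r = m" | "r = m + 1"
proof -
  have "r < m \<or> r = m \<or> r = m + 1"
    using assms by linarith
  then show ?thesis
    using that by blast
qed

lemma congruence_generator_elementary:
  assumes "t < n" "s \<noteq> t"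
    and bracket: "\<And>r c. r < n \<Longrightarrow> c < n \<Longrightarrow>
      Mmat_bracket n x r c
        = (if r = s then Mmat n t c else 0) + (if c = s then Mmat n r t else (0 :: 'a::comm_ring_1 spoly))"
  shows "congruence_generator n x (\<lambda>r l. if l = t then (if r = s then 1 else 0) else (0 :: 'a spoly))"
proof -
  have "(Mmat_bracket n x r c :: 'a spoly)
      = (\<Sum>l<n. (if l = t then (if r = s then 1 else 0) else 0) * Mmat n l c)
        + (\<Sum>l<n. Mmat n r l * (if l = t then (if c = s then 1 else 0) else 0))"
    if "r < n" "c < n" for r c
    using assms(1) bracket[OF that] by (simp add: sum_delta_mult_left sum_delta_mult_right)
  moreover have "(\<Sum>i<n. if i = t then (if i = s then 1 else 0) else (0::'a spoly)) = 0"
    using assms(2) by simp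
  ultimately show ?thesis
    by (simp add: congruence_generator_def)
qed

lemma congruence_generator_H:
  assumes "n = m + 2"
  shows "congruence_generator n H
    (\<lambda>r l. if l = r then (if r = m then 1 else if r = m + 1 then - 1 else 0) else 0)"
proof -
  define d :: "nat \<Rightarrow> 'a spoly" where "d r = (if r = m then 1 else if r = m + 1 then - 1 else 0)" for r
  have "Mmat_bracket n H r c
      = (\<Sum>l<n. (if l = r then d r else 0) * Mmat n l c) + (\<Sum>l<n. Mmat n r l * (if l = c then d c else 0))"
    if "r < n" "c < n" for r c
  proof -
    have "Mmat_bracket n H r c = d r * Mmat n r c + Mmat n r c * d c"
      using that unfolding assms d_def by (elim less_add_2_cases) (simp_all add: Mmat_def Mmat_bracket_def)
    then show ?thesis
      using that by (simp add: sum_delta_mult_left sum_delta_mult_right)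
  qed
  moreover have "(\<Sum>i<n. d i) = 0"
    unfolding assms d_def by simp
  ultimately have "congruence_generator n H (\<lambda>r l. if l = r then d r else 0)"
    by (simp add: congruence_generator_def)
  then show ?thesis
    unfolding d_def .
qed

lemma congruence_generator_Xm:
  assumes "n = m + 2"
  shows "congruence_generator n Xm
    (\<lambda>r l. if l = m then (if r = m + 1 then 1 else 0) else (0 :: 'a::comm_ring_1 spoly))"
proof (rule congruence_generator_elementary)
  fix r c assume "r < n" "c < n"
  then show "(Mmat_bracket n Xm r c :: 'a spoly)
      = (if r = m + 1 then Mmat n m c else 0) + (if c = m + 1 then Mmat n r m else 0)"
    unfolding assms by (elim less_add_2_cases) (simp_all add: Mmat_def Mmat_bracket_def min_def max_def)
qed (use assms in auto)

lemma congruence_generator_Xp: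
  assumes "n = m + 2"
  shows "congruence_generator n Xp
    (\<lambda>r l. if l = m + 1 then (if r = m then 1 else 0) else (0 :: 'a::comm_ring_1 spoly))"
proof (rule congruence_generator_elementary)
  fix r c assume "r < n" "c < n"
  then show "(Mmat_bracket n Xp r c :: 'a spoly)
      = (if r = m then Mmat n (m + 1) c else 0) + (if c = m then Mmat n r (m + 1) else 0)"
    unfolding assms by (elim less_add_2_cases) (simp_all add: Mmat_def Mmat_bracket_def min_def max_def)
qed (use assms in auto)

lemma congruence_generator_Ym:
  assumes "n = m + 2" "k < m"
  shows "congruence_generator n (Ym (Suc k))
    (\<lambda>r l. if l = k then (if r = m + 1 then 1 else 0) else (0 :: 'a::comm_ring_1 spoly))"
proof (rule congruence_generator_elementary)
  fix r c assume "r < n" "c < n"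
  then show "(Mmat_bracket n (Ym (Suc k)) r c :: 'a spoly)
      = (if r = m + 1 then Mmat n k c else 0) + (if c = m + 1 then Mmat n r k else 0)"
    using assms(2) unfolding assms(1)
    by (elim less_add_2_cases) (simp_all add: Mmat_def Mmat_bracket_def min.commute max.commute)
qed (use assms in auto)

lemma congruence_generator_Yp:
  assumes "n = m + 2" "k < m"
  shows "congruence_generator n (Yp (Suc k))
    (\<lambda>r l. if l = k then (if r = m then 1 else 0) else (0 :: 'a::comm_ring_1 spoly))"
proof (rule congruence_generator_elementary)
  fix r c assume "r < n" "c < n"
  then show "(Mmat_bracket n (Yp (Suc k)) r c :: 'a spoly)
      = (if r = m then Mmat n k c else 0) + (if c = m then Mmat n r k else 0)"
    using assms(2) unfolding assms(1)
    by (elim less_add_2_cases) (simp_all add: Mmat_def Mmat_bracket_def min.commute max.commute)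
qed (use assms in auto)

lemma congruence_generator_Z: "congruence_generator n (Z i j) (\<lambda>r l. 0 :: 'a::comm_ring_1 spoly)"
  by (simp add: congruence_generator_def Mmat_bracket_def)

lemma congruence_generator_exists:
  assumes "2 \<le> n" "x \<in> gbasis n"
  obtains K :: "nat \<Rightarrow> nat \<Rightarrow> 'a::comm_ring_1 spoly" where "congruence_generator n x K"
proof -
  obtain m where m: "n = m + 2"
    using assms(1) le_Suc_ex by (metis add.commute)
  consider "x = H" | "x = Xm" | "x = Xp" | k where "k < m" "x = Ym (Suc k)"
    | k where "k < m" "x = Yp (Suc k)" | i j where "x = Z i j"
    using assms(2) m unfolding gbasis_eq_core_central core_basis_def central_basis_def by auto
  then show ?thesis
  proof cases
    case 1
    then show ?thesis using congruence_generator_H[OF m] that by blast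
  next
    case 2
    then show ?thesis using congruence_generator_Xm[OF m] that by blast
  next
    case 3
    then show ?thesis using congruence_generator_Xp[OF m] that by blast
  next
    case (4 k)
    then show ?thesis using congruence_generator_Ym[OF m, of k] that by auto
  next
    case (5 k)
    then show ?thesis using congruence_generator_Yp[OF m, of k] that by auto
  next
    case (6 i j)
    then show ?thesis using congruence_generator_Z that by blast
  qed
qed

lemma pb_Cn_var:
  assumes "2 \<le> n" "x \<in> gbasis n"
  shows "pb n (Cn n :: 'a::comm_ring_1 spoly) (var x) = 0"
proof -
  interpret derivation "\<lambda>f. pb n f (var x)"
    by (rule derivation_pb)
  obtain K :: "nat \<Rightarrow> nat \<Rightarrow> 'a spoly" where K: "congruence_generator n x K"
    using congruence_generator_exists[OF assms] .
  have "pb n (det (Mn n)) (var x) = 2 * (\<Sum>i<n. K i i) * det (Mn n :: 'a spoly mat)"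
    using K by (intro der_det_congruence[OF Mn_carrier])
      (simp add: congruence_generator_def Mn_index pb_Mmat assms(2))
  then show ?thesis
    using K by (simp add: Cn_eq_det der_uminus congruence_generator_def)
qed

section \<open>Variables and degree\<close>

definition vars_in :: "'v set \<Rightarrow> (('v \<Rightarrow>\<^sub>0 nat) \<Rightarrow>\<^sub>0 'a::comm_ring_1) \<Rightarrow> bool" where
  "vars_in G p \<longleftrightarrow> (\<forall>m\<in>Poly_Mapping.keys p. Poly_Mapping.keys m \<subseteq> G)"

lemma vars_in_zero: "vars_in G 0"
  by (simp add: vars_in_def)

lemma vars_in_add: "vars_in G p \<Longrightarrow> vars_in G q \<Longrightarrow> vars_in G (p + q)"
  using keys_add[of p q] by (auto simp: vars_in_def)

lemma vars_in_uminus [simp]: "vars_in G (- p) \<longleftrightarrow> vars_in G p"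
  by (simp add: vars_in_def)

lemma vars_in_mult:
  assumes "vars_in G p" "vars_in G q"
  shows "vars_in G (p * q)"
  unfolding vars_in_def
proof
  fix m assume "m \<in> Poly_Mapping.keys (p * q)"
  then obtain a b where "m = a + b" "a \<in> Poly_Mapping.keys p" "b \<in> Poly_Mapping.keys q"
    using keys_mult[of p q] by blast
  then show "Poly_Mapping.keys m \<subseteq> G"
    using assms keys_add[of a b] unfolding vars_in_def by blast
qed

lemma vars_in_const: "vars_in G (Poly_Mapping.single 0 c)"
  by (simp add: vars_in_def)

lemma vars_in_var: "v \<in> G \<Longrightarrow> vars_in G (var v)"
  by (simp add: vars_in_def var_def)

lemma vars_in_sum: "(\<And>i. i \<in> I \<Longrightarrow> vars_in G (f i)) \<Longrightarrow> vars_in G (sum f I)"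
  by (induction I rule: infinite_finite_induct) (auto simp: vars_in_zero intro!: vars_in_add)

lemma vars_in_prod: "(\<And>i. i \<in> I \<Longrightarrow> vars_in G (f i)) \<Longrightarrow> vars_in G (prod f I)"
  by (induction I rule: infinite_finite_induct)
    (auto intro: vars_in_mult simp flip: single_one intro!: vars_in_const)

definition monomial_degree :: "('v \<Rightarrow>\<^sub>0 nat) \<Rightarrow> nat" where
  "monomial_degree m = (\<Sum>v\<in>Poly_Mapping.keys m. Poly_Mapping.lookup m v)"

lemma monomial_degree_add: "monomial_degree (m + m') = monomial_degree m + monomial_degree m'"
proof -
  have superset: "monomial_degree k = (\<Sum>v\<in>T. Poly_Mapping.lookup k v)"
    if "finite T" "Poly_Mapping.keys k \<subseteq> T" for k T
    unfolding monomial_degree_def by (rule sum.mono_neutral_left) (use that in \<open>auto simp: in_keys_iff\<close>)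
  let ?T = "Poly_Mapping.keys m \<union> Poly_Mapping.keys m'"
  have "monomial_degree (m + m') = (\<Sum>v\<in>?T. Poly_Mapping.lookup (m + m') v)"
    using keys_add[of m m'] by (intro superset) auto
  also have "\<dots> = monomial_degree m + monomial_degree m'"
    using superset[of ?T m] superset[of ?T m'] by (simp add: lookup_add sum.distrib)
  finally show ?thesis .
qed

definition homogeneous :: "nat \<Rightarrow> (('v \<Rightarrow>\<^sub>0 nat) \<Rightarrow>\<^sub>0 'a::comm_ring_1) \<Rightarrow> bool" where
  "homogeneous d p \<longleftrightarrow> (\<forall>m\<in>Poly_Mapping.keys p. monomial_degree m = d)"

lemma homogeneous_zero: "homogeneous d 0"
  by (simp add: homogeneous_def)

lemma homogeneous_add: "homogeneous d p \<Longrightarrow> homogeneous d q \<Longrightarrow> homogeneous d (p + q)"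
  using keys_add[of p q] by (auto simp: homogeneous_def)

lemma homogeneous_uminus [simp]: "homogeneous d (- p) \<longleftrightarrow> homogeneous d p"
  by (simp add: homogeneous_def)

lemma homogeneous_mult:
  assumes "homogeneous d p" "homogeneous e q"
  shows "homogeneous (d + e) (p * q)"
  unfolding homogeneous_def
proof
  fix m assume "m \<in> Poly_Mapping.keys (p * q)"
  then obtain a b where "m = a + b" "a \<in> Poly_Mapping.keys p" "b \<in> Poly_Mapping.keys q"
    using keys_mult[of p q] by blast
  then show "monomial_degree m = d + e"
    using assms by (auto simp: homogeneous_def monomial_degree_add)
qed

lemma homogeneous_const: "homogeneous 0 (Poly_Mapping.single 0 c)"
  by (simp add: homogeneous_def monomial_degree_def)

lemma homogeneous_var: "homogeneous 1 (var v)"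
  by (simp add: homogeneous_def var_def monomial_degree_def)

lemma homogeneous_sum: "(\<And>i. i \<in> I \<Longrightarrow> homogeneous d (f i)) \<Longrightarrow> homogeneous d (sum f I)"
  by (induction I rule: infinite_finite_induct) (auto simp: homogeneous_zero intro!: homogeneous_add)

lemma homogeneous_prod:
  "finite I \<Longrightarrow> (\<And>i. i \<in> I \<Longrightarrow> homogeneous d (f i)) \<Longrightarrow> homogeneous (d * card I) (prod f I)"
proof (induction I rule: finite_induct)
  case empty
  then show ?case
    using homogeneous_const[of 1] by simp
next
  case (insert x F)
  then have "homogeneous (d + d * card F) (f x * prod f F)"
    by (intro homogeneous_mult) auto
  then show ?case
    using insert by simp
qed

lemma vars_in_Mmat: "vars_in (gbasis n) (Mmat n r c)"
proof -
  have two: "vars_in (gbasis n) (2 * var v)" if "v \<in> gbasis n" for v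
    using vars_in_mult[OF vars_in_const[of _ 2] vars_in_var[OF that]] by simp
  have Z: "Z (Suc (min r c)) (Suc (max r c)) \<in> gbasis n" if "r < n - 2" "c < n - 2"
    using that by (intro Z_in_gbasis) auto
  show ?thesis
    unfolding Mmat_def by (simp add: vars_in_var two Z Ym_in_gbasis Yp_in_gbasis)
qed

lemma homogeneous_Mmat: "homogeneous 1 (Mmat n r c)"
proof -
  have two: "homogeneous 1 (2 * var v)" for v
    using homogeneous_mult[OF homogeneous_const[of 2] homogeneous_var] by simp
  show ?thesis
    unfolding Mmat_def by (simp only: homogeneous_var homogeneous_uminus two split: if_split) simp
qed

lemma homogeneous_Cn: "homogeneous n (Cn n)"
  unfolding Cn_def detn_def homogeneous_uminus
proof (intro homogeneous_sum)
  fix p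
  have "homogeneous (0 + 1 * card {..<n}) (of_int (sign p) * (\<Prod>i<n. Mmat n i (p i)))"
    using homogeneous_const[of "of_int (sign p)"]
    by (intro homogeneous_mult homogeneous_prod homogeneous_Mmat) simp_all
  then show "homogeneous n (of_int (sign p) * (\<Prod>i<n. Mmat n i (p i)))"
    by simp
qed

lemma casimir_Cn:
  assumes "2 \<le> n"
  shows "casimir n (Cn n :: 'a::comm_ring_1 spoly)"
proof -
  have "vars_in (gbasis n) (Cn n :: 'a spoly)"
    unfolding Cn_def detn_def vars_in_uminus
    using vars_in_const[of _ "of_int _"]
    by (intro vars_in_sum vars_in_mult vars_in_prod vars_in_Mmat) simp_all
  then show ?thesis
    using pb_Cn_var[OF assms, where 'a = 'a] unfolding casimir_def vars_in_def by blast
qed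

lemma casimir_Z:
  assumes "1 \<le> i" "i \<le> j" "j \<le> n - 2"
  shows "casimir n (var (Z i j) :: 'a::comm_ring_1 spoly)"
proof -
  have Z: "Z i j \<in> gbasis n"
    using assms by (rule Z_in_gbasis)
  then have "vars_in (gbasis n) (var (Z i j) :: 'a spoly)"
    by (rule vars_in_var)
  then show ?thesis
    using Z unfolding casimir_def vars_in_def by (simp add: pb_var_var)
qed

section \<open>A point where the gradient of C_n does not vanish\<close>

text \<open>At this point, M_n with its last row and column removed evaluates to the identity.\<close>

definition unit_minor_point :: "gvar \<Rightarrow> 'a::field" where
  "unit_minor_point v = (case v of Z i j \<Rightarrow> if i = j then 1 else 0 | Xm \<Rightarrow> - 1 / 2 | _ \<Rightarrow> 0)"

lemma pd_Xp_Mmat: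
  assumes "n = m + 2" "r < n" "c < n"
  shows "pd Xp (Mmat n r c :: 'a::comm_ring_1 spoly)
    = (if c = Suc m then (if r = Suc m then 2 else 0) else 0)"
  using assms(2,3) unfolding assms(1)
  by (elim less_add_2_cases) (simp_all add: Mmat_def pd_var pd.der_uminus pd.der_mult)

lemma peval_Mmat_unit_minor_point:
  assumes "n = m + 2" "r < Suc m" "c < Suc m"
  shows "peval unit_minor_point (Mmat n r c :: 'a::field_char_0 spoly) = (if r = c then 1 else 0)"
  using assms(2,3) unfolding assms(1)
  by (auto simp: less_Suc_eq Mmat_def unit_minor_point_def min_def max_def
      peval.hom_uminus peval.hom_mult peval.hom_numeral)

lemma peval_pd_Xp_Cn:
  assumes "n = m + 2"
  shows "peval unit_minor_point (pd Xp (Cn n :: 'a::field_char_0 spoly)) = - 2"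
proof -
  have last: "Suc m < n"
    using assms by simp
  have "pd Xp (det (Mn n :: 'a spoly mat))
      = (\<Sum>i<n. \<Sum>j<n. (if j = Suc m then (if i = Suc m then 2 else 0) else 0) * cofactor (Mn n) i j)"
    unfolding pd.der_det[OF Mn_carrier]
    by (intro sum.cong refl) (simp add: Mn_index pd_Xp_Mmat[OF assms])
  also have "\<dots> = 2 * cofactor (Mn n) (Suc m) (Suc m)"
    using last by (simp only: sum_delta_mult_left)
  finally have pd_det: "pd Xp (det (Mn n :: 'a spoly mat)) = 2 * cofactor (Mn n) (Suc m) (Suc m)" .
  have "map_mat (peval unit_minor_point) (mat_delete (Mn n :: 'a spoly mat) (Suc m) (Suc m))
      = 1\<^sub>m (Suc m)"
    using assms by (intro eq_matI) (auto simp: mat_delete_def Mn_def peval_Mmat_unit_minor_point)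
  then have "peval unit_minor_point (cofactor (Mn n :: 'a spoly mat) (Suc m) (Suc m)) = 1"
    by (simp add: cofactor_def flip: peval.hom_det)
  then show ?thesis
    by (simp add: Cn_eq_det pd.der_uminus pd_det peval.hom_uminus peval.hom_mult peval.hom_numeral)
qed

lemma Cn_nonzero:
  assumes "2 \<le> n"
  shows "Cn n \<noteq> (0 :: 'a::field_char_0 spoly)"
proof
  obtain m where "n = m + 2"
    using assms le_Suc_ex by (metis add.commute)
  assume "Cn n = (0 :: 'a spoly)"
  then show False
    using peval_pd_Xp_Cn[OF \<open>n = m + 2\<close>, where 'a = 'a] by simp
qed

section \<open>Gradients of Casimir elements are proportional\<close>

definition zvar :: "nat \<Rightarrow> nat \<Rightarrow> 'a::comm_ring_1 spoly" where
  "zvar i j = var (Z (Suc (min i j)) (Suc (max i j)))"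

lemma zvar_sym: "zvar i j = zvar j i"
  by (simp add: zvar_def min.commute max.commute)

definition Zmat :: "nat \<Rightarrow> 'a::comm_ring_1 spoly mat" where
  "Zmat n = mat (n-2) (n-2) (\<lambda>(i,j). zvar i j)"

text \<open>
  The equations {C, x} = 0 for x = x_-, x_+, y_{j,-}, y_{j,+}, read as a linear system
  for the partial derivatives G a of C.\<close>

definition gradient_equations :: "nat \<Rightarrow> (gvar \<Rightarrow> 'a::comm_ring_1 spoly) \<Rightarrow> bool" where
  "gradient_equations n G \<longleftrightarrow>
    - (2 * var Xm) * G H + var H * G Xp - (\<Sum>i<n-2. var (Ym (Suc i)) * G (Yp (Suc i))) = 0 \<and>
    2 * var Xp * G H - var H * G Xm - (\<Sum>i<n-2. var (Yp (Suc i)) * G (Ym (Suc i))) = 0 \<and>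
    (\<forall>j<n-2. - var (Ym (Suc j)) * G H + var (Yp (Suc j)) * G Xp
       + (\<Sum>i<n-2. zvar i j * G (Yp (Suc i))) = 0) \<and>
    (\<forall>j<n-2. var (Yp (Suc j)) * G H + var (Ym (Suc j)) * G Xm
       - (\<Sum>i<n-2. zvar i j * G (Ym (Suc i))) = 0)"

lemma casimir_gradient_equations:
  assumes "casimir n (C :: 'a::comm_ring_1 spoly)"
  shows "gradient_equations n (\<lambda>a. pd a C)"
proof -
  have bracket: "brk H x * pd H C + brk Xm x * pd Xm C + brk Xp x * pd Xp C
      + (\<Sum>k<n-2. brk (Ym (Suc k)) x * pd (Ym (Suc k)) C)
      + (\<Sum>k<n-2. brk (Yp (Suc k)) x * pd (Yp (Suc k)) C) = 0" if "x \<in> gbasis n" for x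
    using assms that by (simp add: casimir_def pb_var_eq_core_sum sum_core_basis)
  have Y: "Ym (Suc j) \<in> gbasis n" "Yp (Suc j) \<in> gbasis n" if "j < n - 2" for j
    using that by (auto intro: Ym_in_gbasis Yp_in_gbasis)
  have "- var (Ym (Suc j)) * pd H C + var (Yp (Suc j)) * pd Xp C
      + (\<Sum>i<n-2. zvar i j * pd (Yp (Suc i)) C) = 0" if "j < n - 2" for j
    using bracket[OF Y(1)[OF that]] by (simp add: zvar_def algebra_simps)
  moreover have "var (Yp (Suc j)) * pd H C + var (Ym (Suc j)) * pd Xm C
      - (\<Sum>i<n-2. zvar i j * pd (Ym (Suc i)) C) = 0" if "j < n - 2" for j
    using bracket[OF Y(2)[OF that]]
    by (simp add: zvar_def algebra_simps sum_negf min.commute max.commute)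
  ultimately show ?thesis
    using bracket[OF Xm_in_gbasis] bracket[OF Xp_in_gbasis]
    unfolding gradient_equations_def by (simp add: sum_negf)
qed

definition adjZ_Ym :: "nat \<Rightarrow> nat \<Rightarrow> 'a::comm_ring_1 spoly" where
  "adjZ_Ym n k = (\<Sum>j<n-2. cofactor (Zmat n) j k * var (Ym (Suc j)))"

definition adjZ_Yp :: "nat \<Rightarrow> nat \<Rightarrow> 'a::comm_ring_1 spoly" where
  "adjZ_Yp n k = (\<Sum>j<n-2. cofactor (Zmat n) j k * var (Yp (Suc j)))"

lemma Zmat_solution:
  assumes "\<And>j. j < n - 2 \<Longrightarrow> (\<Sum>i<n-2. zvar i j * v i) = w j" "k < n - 2"
  shows "det (Zmat n) * v k = (\<Sum>j<n-2. cofactor (Zmat n) j k * w j)"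
  using assms by (intro cofactor_solution) (auto simp: Zmat_def zvar_sym)

lemma det_Zmat_gradient_Yp:
  assumes "gradient_equations n G" "k < n - 2"
  shows "det (Zmat n) * G (Yp (Suc k)) = G H * adjZ_Ym n k - G Xp * adjZ_Yp n k"
proof -
  have "det (Zmat n) * G (Yp (Suc k))
      = (\<Sum>j<n-2. cofactor (Zmat n) j k * (var (Ym (Suc j)) * G H - var (Yp (Suc j)) * G Xp))"
    using assms unfolding gradient_equations_def
    by (intro Zmat_solution) (auto simp: algebra_simps eq_neg_iff_add_eq_0)
  then show ?thesis
    by (simp add: adjZ_Ym_def adjZ_Yp_def right_diff_distrib sum_subtractf sum_distrib_left mult_ac)
qed

lemma det_Zmat_gradient_Ym:
  assumes "gradient_equations n G" "k < n - 2"
  shows "det (Zmat n) * G (Ym (Suc k)) = G H * adjZ_Yp n k + G Xm * adjZ_Ym n k"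
proof -
  have "det (Zmat n) * G (Ym (Suc k))
      = (\<Sum>j<n-2. cofactor (Zmat n) j k * (var (Yp (Suc j)) * G H + var (Ym (Suc j)) * G Xm))"
    using assms unfolding gradient_equations_def
    by (intro Zmat_solution) (auto simp: algebra_simps)
  then show ?thesis
    by (simp add: adjZ_Ym_def adjZ_Yp_def distrib_left sum.distrib sum_distrib_left mult_ac)
qed

text \<open>
  Eliminating the y-derivatives with the adjugate of Z leaves, for X = x_+ and X = x_-,
  one equation den_X * G X = num_X * G h.\<close>

definition den_Xp :: "nat \<Rightarrow> 'a::comm_ring_1 spoly" where
  "den_Xp n = var H * det (Zmat n) + (\<Sum>i<n-2. var (Ym (Suc i)) * adjZ_Yp n i)"

definition num_Xp :: "nat \<Rightarrow> 'a::comm_ring_1 spoly" where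
  "num_Xp n = 2 * var Xm * det (Zmat n) + (\<Sum>i<n-2. var (Ym (Suc i)) * adjZ_Ym n i)"

definition den_Xm :: "nat \<Rightarrow> 'a::comm_ring_1 spoly" where
  "den_Xm n = var H * det (Zmat n) + (\<Sum>i<n-2. var (Yp (Suc i)) * adjZ_Ym n i)"

definition num_Xm :: "nat \<Rightarrow> 'a::comm_ring_1 spoly" where
  "num_Xm n = 2 * var Xp * det (Zmat n) - (\<Sum>i<n-2. var (Yp (Suc i)) * adjZ_Yp n i)"

lemma den_Xp_gradient:
  assumes G: "gradient_equations n G"
  shows "den_Xp n * G Xp = num_Xp n * G H"
proof -
  have "det (Zmat n) * (- (2 * var Xm) * G H + var H * G Xp
      - (\<Sum>i<n-2. var (Ym (Suc i)) * G (Yp (Suc i)))) = 0"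
    using G by (simp add: gradient_equations_def)
  then have "- (2 * var Xm) * G H * det (Zmat n) + var H * G Xp * det (Zmat n)
      - (\<Sum>i<n-2. var (Ym (Suc i)) * (det (Zmat n) * G (Yp (Suc i)))) = 0"
    by (simp add: algebra_simps sum_distrib_left)
  then have "- (2 * var Xm) * G H * det (Zmat n) + var H * G Xp * det (Zmat n)
      - (\<Sum>i<n-2. var (Ym (Suc i)) * (G H * adjZ_Ym n i - G Xp * adjZ_Yp n i)) = 0"
    using det_Zmat_gradient_Yp[OF G] by simp
  then show ?thesis
    by (simp add: den_Xp_def num_Xp_def algebra_simps sum_subtractf sum_distrib_left sum_distrib_right)
qed

lemma den_Xm_gradient:
  assumes G: "gradient_equations n G"
  shows "den_Xm n * G Xm = num_Xm n * G H"
proof -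
  have "det (Zmat n) * (2 * var Xp * G H - var H * G Xm
      - (\<Sum>i<n-2. var (Yp (Suc i)) * G (Ym (Suc i)))) = 0"
    using G by (simp add: gradient_equations_def)
  then have "2 * var Xp * G H * det (Zmat n) - var H * G Xm * det (Zmat n)
      - (\<Sum>i<n-2. var (Yp (Suc i)) * (det (Zmat n) * G (Ym (Suc i)))) = 0"
    by (simp add: algebra_simps sum_distrib_left)
  then have "2 * var Xp * G H * det (Zmat n) - var H * G Xm * det (Zmat n)
      - (\<Sum>i<n-2. var (Yp (Suc i)) * (G H * adjZ_Yp n i + G Xm * adjZ_Ym n i)) = 0"
    using det_Zmat_gradient_Ym[OF G] by simp
  then show ?thesis
    by (simp add: den_Xm_def num_Xm_def algebra_simps sum.distrib sum_distrib_left sum_distrib_right)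
qed

definition gradient_den :: "nat \<Rightarrow> 'a::comm_ring_1 spoly" where
  "gradient_den n = den_Xp n * den_Xm n * det (Zmat n)"

definition gradient_num :: "nat \<Rightarrow> gvar \<Rightarrow> 'a::comm_ring_1 spoly" where
  "gradient_num n a = (case a of
       H \<Rightarrow> gradient_den n
     | Xp \<Rightarrow> den_Xm n * det (Zmat n) * num_Xp n
     | Xm \<Rightarrow> den_Xp n * det (Zmat n) * num_Xm n
     | Yp i \<Rightarrow> den_Xm n * (den_Xp n * adjZ_Ym n (i - 1) - adjZ_Yp n (i - 1) * num_Xp n)
     | Ym i \<Rightarrow> den_Xp n * (den_Xm n * adjZ_Yp n (i - 1) + adjZ_Ym n (i - 1) * num_Xm n)
     | Z i j \<Rightarrow> 0)"

lemma gradient_den_mult_Xp: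
  assumes G: "gradient_equations n G"
  shows "gradient_den n * G Xp = gradient_num n Xp * G H"
proof -
  have "gradient_den n * G Xp = den_Xm n * det (Zmat n) * (den_Xp n * G Xp)"
    by (simp add: gradient_den_def mult_ac)
  also have "\<dots> = den_Xm n * det (Zmat n) * (num_Xp n * G H)"
    by (simp only: den_Xp_gradient[OF G])
  finally show ?thesis
    by (simp add: gradient_num_def mult_ac)
qed

lemma gradient_den_mult_Xm:
  assumes G: "gradient_equations n G"
  shows "gradient_den n * G Xm = gradient_num n Xm * G H"
proof -
  have "gradient_den n * G Xm = den_Xp n * det (Zmat n) * (den_Xm n * G Xm)"
    by (simp add: gradient_den_def mult_ac)
  also have "\<dots> = den_Xp n * det (Zmat n) * (num_Xm n * G H)"
    by (simp only: den_Xm_gradient[OF G])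
  finally show ?thesis
    by (simp add: gradient_num_def mult_ac)
qed

lemma gradient_den_mult_Yp:
  assumes G: "gradient_equations n G" and "k < n - 2"
  shows "gradient_den n * G (Yp (Suc k)) = gradient_num n (Yp (Suc k)) * G H"
proof -
  have "gradient_den n * G (Yp (Suc k)) = den_Xm n * (den_Xp n * (det (Zmat n) * G (Yp (Suc k))))"
    by (simp add: gradient_den_def mult_ac)
  also have "\<dots> = den_Xm n * (den_Xp n * adjZ_Ym n k * G H - adjZ_Yp n k * (den_Xp n * G Xp))"
    unfolding det_Zmat_gradient_Yp[OF assms] by (simp add: algebra_simps)
  also have "\<dots> = den_Xm n * (den_Xp n * adjZ_Ym n k * G H - adjZ_Yp n k * (num_Xp n * G H))"
    by (simp only: den_Xp_gradient[OF G])
  finally show ?thesis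
    by (simp add: gradient_num_def algebra_simps)
qed

lemma gradient_den_mult_Ym:
  assumes G: "gradient_equations n G" and "k < n - 2"
  shows "gradient_den n * G (Ym (Suc k)) = gradient_num n (Ym (Suc k)) * G H"
proof -
  have "gradient_den n * G (Ym (Suc k)) = den_Xp n * (den_Xm n * (det (Zmat n) * G (Ym (Suc k))))"
    by (simp add: gradient_den_def mult_ac)
  also have "\<dots> = den_Xp n * (den_Xm n * adjZ_Yp n k * G H + adjZ_Ym n k * (den_Xm n * G Xm))"
    unfolding det_Zmat_gradient_Ym[OF assms] by (simp add: algebra_simps)
  also have "\<dots> = den_Xp n * (den_Xm n * adjZ_Yp n k * G H + adjZ_Ym n k * (num_Xm n * G H))"
    by (simp only: den_Xm_gradient[OF G])
  finally show ?thesis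
    by (simp add: gradient_num_def algebra_simps)
qed

lemma gradient_den_mult:
  assumes "gradient_equations n G" "a \<in> core_basis n"
  shows "gradient_den n * G a = gradient_num n a * G H"
  using assms gradient_den_mult_Xp gradient_den_mult_Xm gradient_den_mult_Yp gradient_den_mult_Ym
  unfolding core_basis_def by (auto simp: gradient_num_def)

definition unit_Z_point :: "gvar \<Rightarrow> 'a::comm_ring_1" where
  "unit_Z_point v = (case v of Z i j \<Rightarrow> if i = j then 1 else 0 | H \<Rightarrow> 1 | _ \<Rightarrow> 0)"

lemma peval_det_Zmat_unit_Z_point: "peval unit_Z_point (det (Zmat n) :: 'a::comm_ring_1 spoly) = 1"
proof -
  have "map_mat (peval unit_Z_point) (Zmat n :: 'a spoly mat) = 1\<^sub>m (n-2)"
    by (intro eq_matI) (auto simp: Zmat_def zvar_def unit_Z_point_def min_def max_def)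
  then show ?thesis
    by (simp flip: peval.hom_det)
qed

lemma gradient_den_nonzero: "gradient_den n \<noteq> (0 :: 'a::comm_ring_1 spoly)"
proof -
  have "peval unit_Z_point (adjZ_Ym n k :: 'a spoly) = 0"
    and "peval unit_Z_point (adjZ_Yp n k :: 'a spoly) = 0" for k
    by (simp_all add: adjZ_Ym_def adjZ_Yp_def peval.hom_sum peval.hom_mult unit_Z_point_def)
  then have "peval unit_Z_point (gradient_den n :: 'a spoly) = 1"
    by (simp add: gradient_den_def den_Xp_def den_Xm_def peval.hom_add peval.hom_mult peval.hom_sum
        peval_det_Zmat_unit_Z_point unit_Z_point_def)
  then show ?thesis
    by auto
qed

text \<open>
  The linear order on gvar is only used to make the polynomial ring an integral domain:
  the library's idom instance for poly_mapping requires linearly ordered monomials.\<close>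

fun gvar_code :: "gvar \<Rightarrow> nat \<times> nat \<times> nat" where
  "gvar_code H = (0, 0, 0)"
| "gvar_code Xm = (1, 0, 0)"
| "gvar_code Xp = (2, 0, 0)"
| "gvar_code (Ym i) = (3, i, 0)"
| "gvar_code (Yp i) = (4, i, 0)"
| "gvar_code (Z i j) = (5, i, j)"

lemma inj_gvar_code: "inj gvar_code"
proof (rule injI)
  fix x y
  show "gvar_code x = gvar_code y \<Longrightarrow> x = y"
    by (cases x; cases y) simp_all
qed

instantiation gvar :: linorder
begin

definition less_eq_gvar :: "gvar \<Rightarrow> gvar \<Rightarrow> bool" where
  "less_eq_gvar x y \<longleftrightarrow> gvar_code x \<le> gvar_code y"

definition less_gvar :: "gvar \<Rightarrow> gvar \<Rightarrow> bool" where
  "less_gvar x y \<longleftrightarrow> gvar_code x < gvar_code y"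

instance
proof
  fix x y z :: gvar
  show "x < y \<longleftrightarrow> x \<le> y \<and> \<not> y \<le> x"
    by (auto simp: less_eq_gvar_def less_gvar_def)
  show "x \<le> x"
    by (simp add: less_eq_gvar_def)
  show "x \<le> y \<Longrightarrow> y \<le> z \<Longrightarrow> x \<le> z"
    by (simp add: less_eq_gvar_def)
  show "x \<le> y \<Longrightarrow> y \<le> x \<Longrightarrow> x = y"
    by (simp add: less_eq_gvar_def inj_eq[OF inj_gvar_code])
  show "x \<le> y \<or> y \<le> x"
    by (auto simp: less_eq_gvar_def)
qed

end

lemma gradients_proportional:
  fixes G G' :: "gvar \<Rightarrow> 'a::idom spoly"
  assumes "gradient_equations n G" "gradient_equations n G'" "a \<in> core_basis n" "b \<in> core_basis n"
  shows "G a * G' b = G b * G' a"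
proof -
  have "gradient_den n * gradient_den n * (G a * G' b - G b * G' a)
      = (gradient_den n * G a) * (gradient_den n * G' b)
        - (gradient_den n * G b) * (gradient_den n * G' a)"
    by (simp add: algebra_simps)
  also have "\<dots> = 0"
    by (simp add: gradient_den_mult assms)
  finally show ?thesis
    using gradient_den_nonzero[where 'a = 'a] by simp
qed

lemma casimir_gradients_proportional:
  assumes "casimir n (C :: 'a::idom spoly)" "casimir n C'" "a \<in> core_basis n" "b \<in> core_basis n"
  shows "pd a C * pd b C' = pd b C * pd a C'"
  using assms(3,4) by (rule gradients_proportional[OF casimir_gradient_equations[OF assms(1)]
        casimir_gradient_equations[OF assms(2)]])

section \<open>Functional independence\<close>

definition zvars :: "nat \<Rightarrow> 'a::comm_ring_1 spoly list" where
  "zvars n = map (\<lambda>(i, j). var (Z i j)) (zpairs n)"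

definition zpair_var :: "nat \<Rightarrow> nat \<Rightarrow> gvar" where
  "zpair_var n k = (case zpairs n ! k of (i, j) \<Rightarrow> Z i j)"

lemma length_zvars [simp]: "length (zvars n) = length (zpairs n)"
  by (simp add: zvars_def)

lemma nth_zvars: "k < length (zpairs n) \<Longrightarrow> zvars n ! k = var (zpair_var n k)"
  by (simp add: zvars_def zpair_var_def split: prod.split)

lemma set_zpairs: "set (zpairs n) = {(i, j). 1 \<le> i \<and> i \<le> j \<and> j \<le> n - 2}"
  unfolding zpairs_def
proof (auto, goal_cases)
  case (1 i j)
  then show ?case
    by (intro bexI[of _ i]) auto
qed

lemma distinct_concat_map_Pair:
  "distinct xs \<Longrightarrow> (\<And>i. distinct (f i)) \<Longrightarrow> distinct (concat (map (\<lambda>i. map (Pair i) (f i)) xs))"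
  by (induction xs) (auto simp: distinct_map inj_on_def)

lemma distinct_zpairs: "distinct (zpairs n)"
  unfolding zpairs_def by (simp add: distinct_concat_map_Pair)

lemma central_basis_eq_zpair_var: "central_basis n = zpair_var n ` {..<length (zpairs n)}"
proof -
  have "central_basis n = (\<lambda>(i, j). Z i j) ` set (zpairs n)"
    by (auto simp: central_basis_def set_zpairs)
  also have "set (zpairs n) = (\<lambda>k. zpairs n ! k) ` {..<length (zpairs n)}"
    by (force simp: in_set_conv_nth)
  finally show ?thesis
    by (simp add: image_image zpair_var_def)
qed

lemma inj_on_zpair_var: "inj_on (zpair_var n) {..<length (zpairs n)}"
proof (rule inj_onI)
  fix k k'
  assume "k \<in> {..<length (zpairs n)}" "k' \<in> {..<length (zpairs n)}"
    and "zpair_var n k = zpair_var n k'"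
  then have "zpairs n ! k = zpairs n ! k'"
    by (auto simp: zpair_var_def split: prod.splits)
  then show "k = k'"
    using \<open>k \<in> _\<close> \<open>k' \<in> _\<close> by (simp add: nth_eq_iff_index_eq[OF distinct_zpairs])
qed

lemma sum_lessThan_add: "(\<Sum>k<m + l. f k) = (\<Sum>k<m. f k) + (\<Sum>k<l. f (m + k :: nat))"
  by (induction l) (simp_all add: add.assoc)

lemma grad_combination_append_zvars:
  "(\<Sum>k<length (Fs @ zvars n). c k * peval \<xi> (pd a ((Fs @ zvars n) ! k)))
     = (\<Sum>k<length Fs. c k * peval \<xi> (pd a (Fs ! k)))
       + (\<Sum>k<length (zpairs n). c (length Fs + k) * (if a = zpair_var n k then 1 else 0))"
proof -
  have "(\<Sum>k<length Fs. c k * peval \<xi> (pd a ((Fs @ zvars n) ! k)))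
      = (\<Sum>k<length Fs. c k * peval \<xi> (pd a (Fs ! k)))"
    by (intro sum.cong refl) (simp add: nth_append)
  moreover have "(\<Sum>k<length (zpairs n).
        c (length Fs + k) * peval \<xi> (pd a ((Fs @ zvars n) ! (length Fs + k))))
      = (\<Sum>k<length (zpairs n). c (length Fs + k) * (if a = zpair_var n k then 1 else 0))"
    by (intro sum.cong refl) (simp add: nth_append nth_zvars peval_pd_var)
  ultimately show ?thesis
    by (simp add: sum_lessThan_add)
qed

lemma sum_zpair_var_core:
  fixes g :: "nat \<Rightarrow> 'a::semiring_1"
  assumes "a \<in> core_basis n"
  shows "(\<Sum>k<length (zpairs n). g k * (if a = zpair_var n k then 1 else 0)) = 0"
proof (intro sum.neutral ballI)
  fix k assume "k \<in> {..<length (zpairs n)}"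
  then have "zpair_var n k \<in> central_basis n"
    by (simp add: central_basis_eq_zpair_var)
  then have "a \<noteq> zpair_var n k"
    using assms core_central_disjoint by blast
  then show "g k * (if a = zpair_var n k then 1 else 0) = 0"
    by simp
qed

lemma sum_zpair_var_delta:
  fixes g :: "nat \<Rightarrow> 'a::semiring_1"
  assumes "k0 < length (zpairs n)"
  shows "(\<Sum>k<length (zpairs n). g k * (if zpair_var n k0 = zpair_var n k then 1 else 0)) = g k0"
proof -
  have "(\<Sum>k<length (zpairs n). g k * (if zpair_var n k0 = zpair_var n k then 1 else 0))
      = (\<Sum>k<length (zpairs n). g k * (if k = k0 then 1 else 0))"
    using assms inj_on_zpair_var[of n] by (intro sum.cong refl) (auto dest: inj_onD)
  then show ?thesis
    using assms by (simp add: sum_delta_mult_right)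
qed

lemma grad_indep_at_append_zvarsD:
  assumes indep: "grad_indep_at n (Fs @ zvars n) \<xi>"
    and core: "\<And>a. a \<in> core_basis n \<Longrightarrow> (\<Sum>k<length Fs. c k * peval \<xi> (pd a (Fs ! k))) = 0"
    and k: "k < length Fs"
  shows "c k = 0"
proof -
  \<comment> \<open>extend c by coefficients of the z_{ij} that cancel the central components\<close>
  define c' where "c' k = (if k < length Fs then c k
      else - (\<Sum>i<length Fs. c i * peval \<xi> (pd (zpair_var n (k - length Fs)) (Fs ! i))))" for k
  have c'_Fs: "(\<Sum>k<length Fs. c' k * peval \<xi> (pd a (Fs ! k)))
      = (\<Sum>k<length Fs. c k * peval \<xi> (pd a (Fs ! k)))" for a
    by (intro sum.cong refl) (simp add: c'_def)
  have "(\<Sum>k<length (Fs @ zvars n). c' k * peval \<xi> (pd a ((Fs @ zvars n) ! k))) = 0"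
    if a: "a \<in> gbasis n" for a
  proof (cases "a \<in> core_basis n")
    case True
    then show ?thesis
      unfolding grad_combination_append_zvars by (simp add: sum_zpair_var_core c'_Fs core)
  next
    case False
    then obtain k0 where k0: "k0 < length (zpairs n)" "a = zpair_var n k0"
      using a by (auto simp: gbasis_eq_core_central central_basis_eq_zpair_var)
    then show ?thesis
      unfolding grad_combination_append_zvars by (simp add: sum_zpair_var_delta c'_Fs) (simp add: c'_def)
  qed
  then have "c' k = 0"
    using indep k unfolding grad_indep_at_def by auto
  then show ?thesis
    using k by (simp add: c'_def)
qed

lemma grad_indep_at_append_zvarsI:
  assumes core_indep: "\<And>c. (\<And>a. a \<in> core_basis n \<Longrightarrow> (\<Sum>k<length Fs. c k * peval \<xi> (pd a (Fs ! k))) = 0)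
      \<Longrightarrow> \<forall>k<length Fs. c k = 0"
  shows "grad_indep_at n (Fs @ zvars n) \<xi>"
  unfolding grad_indep_at_def
proof (rule allI, rule impI)
  fix c
  assume eqs: "\<forall>a\<in>gbasis n. (\<Sum>k<length (Fs @ zvars n). c k * peval \<xi> (pd a ((Fs @ zvars n) ! k))) = 0"
  have Fs: "\<forall>k<length Fs. c k = 0"
  proof (rule core_indep)
    fix a assume "a \<in> core_basis n"
    then show "(\<Sum>k<length Fs. c k * peval \<xi> (pd a (Fs ! k))) = 0"
      using eqs[rule_format, of a] unfolding grad_combination_append_zvars
      by (simp add: gbasis_eq_core_central sum_zpair_var_core)
  qed
  have zs: "c (length Fs + k0) = 0" if "k0 < length (zpairs n)" for k0
  proof -
    have "zpair_var n k0 \<in> gbasis n"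
      using that by (auto simp: gbasis_eq_core_central central_basis_eq_zpair_var)
    then show ?thesis
      using eqs[rule_format, of "zpair_var n k0"] Fs that unfolding grad_combination_append_zvars
      by (simp add: sum_zpair_var_delta)
  qed
  show "\<forall>k<length (Fs @ zvars n). c k = 0"
  proof (intro allI impI)
    fix k assume "k < length (Fs @ zvars n)"
    then show "c k = 0"
      using Fs zs[of "k - length Fs"] by (cases "k < length Fs") simp_all
  qed
qed

lemma proportional_imp_dependent:
  fixes u w :: "'b \<Rightarrow> 'a::comm_ring_1"
  assumes "\<And>a b. a \<in> S \<Longrightarrow> b \<in> S \<Longrightarrow> u a * w b = u b * w a"
  obtains c0 c1 where "c0 \<noteq> 0 \<or> c1 \<noteq> 0" "\<And>a. a \<in> S \<Longrightarrow> c0 * u a + c1 * w a = 0"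
proof (cases "\<forall>a\<in>S. w a = 0")
  case True
  then show ?thesis
    using that[of 0 1] by auto
next
  case False
  then obtain b where "b \<in> S" "w b \<noteq> 0"
    by blast
  then show ?thesis
    using that[of "w b" "- u b"] assms by (auto simp: mult.commute)
qed

lemma Xp_in_core_basis: "Xp \<in> core_basis n"
  by (simp add: core_basis_def)

lemma invariants_independent:
  assumes "2 \<le> n"
  shows "functionally_independent n (invariants n :: 'a::field_char_0 spoly list)"
proof -
  obtain m where m: "n = m + 2"
    using assms le_Suc_ex by (metis add.commute)
  have "grad_indep_at n ([Cn n] @ zvars n) (unit_minor_point :: gvar \<Rightarrow> 'a)"
  proof (rule grad_indep_at_append_zvarsI)
    fix c :: "nat \<Rightarrow> 'a"
    assume "\<And>a. a \<in> core_basis n \<Longrightarrow>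
      (\<Sum>k<length [Cn n]. c k * peval unit_minor_point (pd a ([Cn n] ! k))) = 0"
    then have "c 0 * peval unit_minor_point (pd Xp (Cn n :: 'a spoly)) = 0"
      using Xp_in_core_basis by fastforce
    then show "\<forall>k<length [Cn n :: 'a spoly]. c k = 0"
      by (simp add: peval_pd_Xp_Cn[OF m])
  qed
  then show ?thesis
    unfolding functionally_independent_def invariants_def zvars_def by auto
qed

lemma casimir_not_independent:
  assumes "2 \<le> n" and C: "casimir n (C :: 'a::field_char_0 spoly)"
  shows "\<not> functionally_independent n (C # invariants n)"
proof
  assume "functionally_independent n (C # invariants n)"
  then obtain \<xi> where indep: "grad_indep_at n ([C, Cn n] @ zvars n) \<xi>"
    by (auto simp: functionally_independent_def invariants_def zvars_def)
  let ?u = "\<lambda>a. peval \<xi> (pd a C)" and ?w = "\<lambda>a. peval \<xi> (pd a (Cn n :: 'a spoly))"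
  have proportional: "?u a * ?w b = ?u b * ?w a" if "a \<in> core_basis n" "b \<in> core_basis n" for a b
    using casimir_gradients_proportional[OF C casimir_Cn[OF assms(1)] that]
    by (metis peval.hom_mult)
  obtain c0 c1 where c: "c0 \<noteq> 0 \<or> c1 \<noteq> 0" "\<And>a. a \<in> core_basis n \<Longrightarrow> c0 * ?u a + c1 * ?w a = 0"
    using proportional_imp_dependent[where S = "core_basis n" and u = ?u and w = ?w] proportional
    by blast
  have "(if k = 0 then c0 else c1) = 0" if "k < length [C, Cn n]" for k
    using grad_indep_at_append_zvarsD[OF indep _ that, of "\<lambda>k. if k = 0 then c0 else c1"] c(2)
    by simp
  from this[of 0] this[of 1] c(1) show False
    by simp
qed

theorem theorem4p3:
  fixes n :: nat
  assumes "n \<ge> 2"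
  shows "(\<forall>i j. 1 \<le> i \<and> i \<le> j \<and> j \<le> n-2 \<longrightarrow> casimir n (var (Z i j) :: 'a::field_char_0 spoly))
    \<and> casimir n (Cn n :: 'a spoly)
    \<and> Cn n \<noteq> (0 :: 'a spoly)
    \<and> (\<forall>m\<in>Poly_Mapping.keys (Cn n :: 'a spoly). (\<Sum>v\<in>Poly_Mapping.keys m. Poly_Mapping.lookup m v) = n)
    \<and> functionally_independent n (invariants n :: 'a spoly list)
    \<and> (\<forall>C :: 'a spoly. casimir n C \<longrightarrow> \<not> functionally_independent n (C # invariants n))"
proof (intro conjI allI impI ballI)
  fix i j :: nat
  assume "1 \<le> i \<and> i \<le> j \<and> j \<le> n - 2"
  then show "casimir n (var (Z i j) :: 'a spoly)"
    by (intro casimir_Z) auto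
next
  fix m
  assume "m \<in> Poly_Mapping.keys (Cn n :: 'a spoly)"
  then show "(\<Sum>v\<in>Poly_Mapping.keys m. Poly_Mapping.lookup m v) = n"
    using homogeneous_Cn[of n, where 'a = 'a] by (simp add: homogeneous_def monomial_degree_def)
next
  fix C :: "'a spoly"
  assume "casimir n C"
  with assms show "\<not> functionally_independent n (C # invariants n)"
    by (rule casimir_not_independent)
qed (use assms in \<open>simp_all add: casimir_Cn Cn_nonzero invariants_independent\<close>)

end
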